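(* Let $(A,B,C,D)$ be reduced words in $a^{\pm1},b^{\pm1}$ defining a local $\mathrm{Aut}(F_3)$ braid representation. Let $x,\mathbf{C},\mathbf{D}$ be formal letters and write the word $C(B(x,\mathbf{C}),\mathbf{D})$, reduced over the alphabet $\{x^{\pm1},\mathbf{C}^{\pm1},\mathbf{D}^{\pm1}\}$, in the form $$W_0(\mathbf{C},\mathbf{D})\,x^{n_1}\,W_1(\mathbf{C},\mathbf{D})\,x^{n_2}\cdots x^{n_k}\,W_k(\mathbf{C},\mathbf{D}),$$ where $W_0,W_k$ are reduced (possibly empty) words in $\mathbf{C}^{\pm1},\mathbf{D}^{\pm1}$, $W_1,\dots,W_{k-1}$ are nonempty reduced words in $\mathbf{C}^{\pm1},\mathbf{D}^{\pm1}$, and $n_1,\dots,n_k$ are nonzero integers. Let $W_i$ also denote the word $W_i(C(y,z),D(y,z))$ in $y^{\pm1},z^{\pm1}$. Then, as words, $$\mathrm{red}\big(C(B(x,C(y,z)),D(y,z))\big)\equiv \mathrm{red}(W_0)\,x^{n_1}\,\mathrm{red}(W_1)\,x^{n_2}\cdots x^{n_k}\,\mathrm{red}(W_k).$$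
   Context: $F_2$ is free on $a,b$; $F_3$ is free on $x_1,x_2,x_3$ (here also written $x,y,z$). For a word $W$ in $a^{\pm1},b^{\pm1}$, $W(U,V)$ denotes the word obtained by substituting the word $U$ for $a$ and $V$ for $b$ (and $U^{-1},V^{-1}$ for $a^{-1},b^{-1}$). $\mathrm{red}(W)$ is the unique reduced word obtained from $W$ by cancelling subwords $ss^{-1}$, $s^{-1}s$; $\equiv$ denotes equality as words. A quadruple $(A,B,C,D)$ of reduced words defines a local $\mathrm{Aut}(F_3)$ braid representation if $\tau:a\mapsto A,b\mapsto B$ and $\kappa:a\mapsto C,b\mapsto D$ are automorphisms of $F_2$ and the automorphisms $s_1: x_1\mapsto A(x_1,x_2),\ x_2\mapsto B(x_1,x_2),\ x_3\mapsto x_3$ and $s_2: x_1\mapsto x_1,\ x_2\mapsto C(x_2,x_3),\ x_3\mapsto D(x_2,x_3)$ of $F_3$ satisfy $s_1s_2s_1=s_2s_1s_2$. *)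

theory Defs
  imports Main
begin

text \<open>Words in a free group: a letter is a generator with a sign
  (True = the generator itself, False = its inverse).\<close>

type_synonym 'g word = "('g \<times> bool) list"

definition inv_letter :: "'g \<times> bool \<Rightarrow> 'g \<times> bool" where
  "inv_letter l = (fst l, \<not> snd l)"

definition inv_word :: "'g word \<Rightarrow> 'g word" where
  "inv_word w = rev (map inv_letter w)"

definition reduced :: "'g word \<Rightarrow> bool" where
  "reduced w \<longleftrightarrow> (\<forall>i. Suc i < length w \<longrightarrow> w ! Suc i \<noteq> inv_letter (w ! i))"

fun red :: "'g word \<Rightarrow> 'g word" where
  "red [] = []"
| "red (l # w) = (case red w of
      [] \<Rightarrow> [l]
    | m # ms \<Rightarrow> (if m = inv_letter l then ms else l # m # ms))"

definition subst :: "('g \<Rightarrow> 'h word) \<Rightarrow> 'g word \<Rightarrow> 'h word" where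
  "subst f w = concat (map (\<lambda>l. if snd l then f (fst l) else inv_word (f (fst l))) w)"

datatype gen2 = ga | gb
datatype gen3 = X1 | X2 | X3
datatype lam = LX | LC | LD   \<comment> \<open>the formal letters x, bold C, bold D\<close>

definition lt :: "'g \<Rightarrow> 'g word" where "lt g = [(g, True)]"

text \<open>W(U,V): substitute U for a and V for b.\<close>
definition sub2 :: "'h word \<Rightarrow> 'h word \<Rightarrow> gen2 word \<Rightarrow> 'h word" where
  "sub2 U V w = subst (\<lambda>g. case g of ga \<Rightarrow> U | gb \<Rightarrow> V) w"

definition is_aut2 :: "gen2 word \<Rightarrow> gen2 word \<Rightarrow> bool" where
  "is_aut2 A B \<longleftrightarrow> bij_betw (\<lambda>w. red (sub2 A B w)) {w. reduced w} {w. reduced w}"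

definition s1_map :: "gen2 word \<Rightarrow> gen2 word \<Rightarrow> gen3 word \<Rightarrow> gen3 word" where
  "s1_map A B w = subst (\<lambda>g. case g of
       X1 \<Rightarrow> sub2 (lt X1) (lt X2) A | X2 \<Rightarrow> sub2 (lt X1) (lt X2) B | X3 \<Rightarrow> lt X3) w"

definition s2_map :: "gen2 word \<Rightarrow> gen2 word \<Rightarrow> gen3 word \<Rightarrow> gen3 word" where
  "s2_map C D w = subst (\<lambda>g. case g of
       X1 \<Rightarrow> lt X1 | X2 \<Rightarrow> sub2 (lt X2) (lt X3) C | X3 \<Rightarrow> sub2 (lt X2) (lt X3) D) w"

definition local_braid_rep :: "gen2 word \<Rightarrow> gen2 word \<Rightarrow> gen2 word \<Rightarrow> gen2 word \<Rightarrow> bool" where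
  "local_braid_rep A B C D \<longleftrightarrow>
     reduced A \<and> reduced B \<and> reduced C \<and> reduced D \<and>
     is_aut2 A B \<and> is_aut2 C D \<and>
     (\<forall>w. red (s1_map A B (s2_map C D (s1_map A B w)))
         = red (s2_map C D (s1_map A B (s2_map C D w))))"

definition xpow :: "'g \<Rightarrow> int \<Rightarrow> 'g word" where
  "xpow g n = replicate (nat \<bar>n\<bar>) (g, n > 0)"

fun assemble :: "'g \<Rightarrow> 'g word list \<Rightarrow> int list \<Rightarrow> 'g word" where
  "assemble g [] ns = []"
| "assemble g [w] ns = w"
| "assemble g (w # ws) [] = w"
| "assemble g (w # ws) (n # ns) = w @ xpow g n @ assemble g ws ns"

end

theory Submission
  imports Defs
begin

text \<open>Substituting x, C(y,z), D(y,z) for the formal letters LX, LC, LD turns the given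
  decomposition of C(B(LX,LC),LD) into a word whose reduction is the left-hand side, since free
  reduction commutes with substitution. Reducing each piece W_i(C(y,z),D(y,z)) separately gives
  words in y, z only, and the inner ones stay nonempty because a \<mapsto> C, b \<mapsto> D is an
  automorphism. The nonzero powers of x between these x-free pieces then block any further
  cancellation, so the concatenation of the reduced pieces is already reduced.\<close>

lemma inv_letter_inv_letter [simp]: "inv_letter (inv_letter l) = l"
  by (simp add: inv_letter_def)

lemma fst_inv_letter [simp]: "fst (inv_letter l) = fst l"
  by (simp add: inv_letter_def)

lemma reduced_Nil [simp]: "reduced []"
  by (simp add: reduced_def)

lemma reduced_Cons: "reduced (l # w) \<longleftrightarrow> reduced w \<and> (w = [] \<or> hd w \<noteq> inv_letter l)"
proof (cases w)
  case (Cons m ms)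
  have "reduced (l # m # ms) \<longleftrightarrow> m \<noteq> inv_letter l \<and> reduced (m # ms)"
    unfolding reduced_def by (auto simp: less_Suc_eq_0_disj nth_Cons split: nat.splits)
  then show ?thesis using Cons by auto
qed (simp add: reduced_def)

lemma reduced_append:
  "reduced (u @ v) \<longleftrightarrow> reduced u \<and> reduced v \<and> (u = [] \<or> v = [] \<or> hd v \<noteq> inv_letter (last u))"
  by (induction u) (auto simp: reduced_Cons)

lemma reduced_append_fst_ne:
  assumes "reduced u" "reduced v" "u \<noteq> [] \<Longrightarrow> v \<noteq> [] \<Longrightarrow> fst (last u) \<noteq> fst (hd v)"
  shows "reduced (u @ v)"
  using assms unfolding reduced_append by (metis fst_inv_letter)

lemma reduced_red: "reduced (red w)"
proof (induction w)
  case (Cons l w)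
  then show ?case by (cases "red w") (auto simp: reduced_Cons)
qed simp

lemma red_of_reduced: "reduced w \<Longrightarrow> red w = w"
proof (induction w)
  case (Cons l w)
  then show ?case by (cases w) (auto simp: reduced_Cons)
qed simp

lemma red_red [simp]: "red (red w) = red w"
  by (simp add: red_of_reduced reduced_red)

lemma red_Cons_red: "red (l # w) = red (l # red w)"
  by simp

lemma red_Cons_inv_letter: "red (l # inv_letter l # w) = red w"
proof (cases "red w")
  case (Cons m ms)
  have "reduced (m # ms)" using Cons reduced_red by metis
  then show ?thesis
    using Cons by (cases ms) (auto simp: reduced_Cons red_of_reduced)
qed simp

lemma red_append_red_left: "red (u @ v) = red (red u @ v)"
proof (induction u)
  case (Cons l u)
  have "red ((l # u) @ v) = red (l # (red u @ v))"
    using Cons.IH by (metis append_Cons red_Cons_red)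
  also have "\<dots> = red (red (l # u) @ v)"
  proof (cases "red u")
    case (Cons m ms)
    show ?thesis
    proof (cases "m = inv_letter l")
      case True
      then have "red (l # u) = ms" using Cons by simp
      then show ?thesis using Cons True red_Cons_inv_letter[of l "ms @ v"] by simp
    qed (use Cons in simp)
  qed simp
  finally show ?case .
qed simp

lemma red_append_red_right: "red (u @ v) = red (u @ red v)"
proof (induction u)
  case (Cons l u)
  have "red ((l # u) @ v) = red (l # red (u @ red v))" using Cons.IH by simp
  then show ?case by simp
qed simp

lemma inv_word_Cons: "inv_word (l # w) = inv_word w @ [inv_letter l]"
  by (simp add: inv_word_def)

lemma inv_word_append: "inv_word (u @ v) = inv_word v @ inv_word u"
  by (simp add: inv_word_def)

lemma red_append_inv_word: "red (w @ inv_word w) = []"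
proof (induction w)
  case (Cons l w)
  have "red ((l # w) @ inv_word (l # w)) = red (l # red (w @ inv_word w @ [inv_letter l]))"
    by (simp add: inv_word_Cons)
  also have "\<dots> = red (l # red (red (w @ inv_word w) @ [inv_letter l]))"
    by (metis append_assoc red_append_red_left)
  also have "\<dots> = []"
    using Cons.IH by (metis append.left_neutral red_Cons_red red_Cons_inv_letter red.simps(1))
  finally show ?case .
qed (simp add: inv_word_def)

lemma subst_append: "subst f (u @ v) = subst f u @ subst f v"
  by (simp add: subst_def)

lemma subst_Cons: "subst f (l # w) = subst f [l] @ subst f w"
  by (simp add: subst_def)

lemma subst_singleton: "subst f [l] = (if snd l then f (fst l) else inv_word (f (fst l)))"
  by (simp add: subst_def)

lemma subst_inv_letter: "subst f [inv_letter l] = inv_word (subst f [l])"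
  by (simp add: subst_def inv_letter_def inv_word_def rev_map comp_def)

lemma subst_inv_word: "subst f (inv_word w) = inv_word (subst f w)"
proof (induction w)
  case (Cons l w)
  then show ?case
    by (simp add: inv_word_Cons inv_word_append subst_append subst_inv_letter subst_Cons[of f l w])
qed (simp add: subst_def inv_word_def)

lemma subst_subst: "subst f (subst g w) = subst (\<lambda>x. subst f (g x)) w"
proof (induction w)
  case (Cons l w)
  then show ?case
    by (simp add: subst_Cons[of _ l w] subst_append subst_singleton subst_inv_word)
qed (simp add: subst_def)

lemma subst_lt [simp]: "subst f (lt g) = f g"
  by (simp add: lt_def subst_def)

lemma subst_lt_id: "subst lt w = w"
  by (induction w) (auto simp: subst_def lt_def inv_word_def inv_letter_def)

lemma subst_sub2: "subst f (sub2 U V w) = sub2 (subst f U) (subst f V) w"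
  unfolding sub2_def subst_subst
  by (rule arg_cong[where f = "\<lambda>h. subst h w"]) (simp add: fun_eq_iff split: gen2.split)

lemma sub2_sub2: "sub2 (sub2 U V C) (sub2 U V D) W = sub2 U V (sub2 C D W)"
  by (simp add: subst_sub2 sub2_def[of U])

lemma sub2_lt_lt: "sub2 (lt ga) (lt gb) w = w"
proof -
  have "(\<lambda>g. case g of ga \<Rightarrow> lt ga | gb \<Rightarrow> lt gb) = lt"
    by (simp add: fun_eq_iff split: gen2.split)
  then show ?thesis by (simp add: sub2_def subst_lt_id)
qed

lemma fst_set_subst: "fst ` set (subst f w) \<subseteq> (\<Union>l\<in>set w. fst ` set (f (fst l)))"
  by (force simp: subst_def inv_word_def inv_letter_def split: if_splits)

lemma fst_set_sub2_lt: "fst ` set (sub2 (lt a) (lt b) w) \<subseteq> {a, b}"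
  using fst_set_subst[of _ w] by (fastforce simp: sub2_def lt_def split: gen2.splits)

lemma set_red_subset: "set (red w) \<subseteq> set w"
proof (induction w)
  case (Cons l w)
  then show ?case by (cases "red w") auto
qed simp

text \<open>A cancelling pair l l\<inverse> is mapped to a cancelling pair u u\<inverse> of words.\<close>
lemma red_subst_red: "red (subst f (red w)) = red (subst f w)"
proof (induction w)
  case (Cons l w)
  have "red (subst f (l # w)) = red (subst f (l # red w))"
    using Cons.IH by (metis subst_Cons red_append_red_right)
  also have "\<dots> = red (subst f (red (l # w)))"
  proof (cases "red w")
    case (Cons m ms)
    show ?thesis
    proof (cases "m = inv_letter l")
      case True
      have "red (subst f (l # inv_letter l # ms))
          = red ((subst f [l] @ inv_word (subst f [l])) @ subst f ms)"
        by (metis subst_Cons subst_inv_letter append_assoc)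
      also have "\<dots> = red (subst f ms)"
        by (metis red_append_red_left red_append_inv_word append.left_neutral)
      finally show ?thesis using Cons True by simp
    qed (use Cons in simp)
  qed simp
  finally show ?case by simp
qed simp

lemma red_sub2_lt_eq_Nil:
  assumes "a \<noteq> b" and "red (sub2 (lt a) (lt b) w) = []"
  shows "red w = []"
proof -
  define h where "h x = (if x = a then lt ga else lt gb)" for x
  have "subst h (sub2 (lt a) (lt b) w) = w"
    using \<open>a \<noteq> b\<close> by (simp add: subst_sub2 h_def sub2_lt_lt)
  then show ?thesis
    using assms(2) red_subst_red[of h "sub2 (lt a) (lt b) w"] by (simp add: subst_def)
qed

lemma red_sub2_ne_Nil_if_aut2:
  assumes "is_aut2 C D" "reduced W" "W \<noteq> []"
  shows "red (sub2 C D W) \<noteq> []"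
proof
  assume "red (sub2 C D W) = []"
  moreover have "red (sub2 C D []) = []" by (simp add: sub2_def subst_def)
  moreover have "inj_on (\<lambda>w. red (sub2 C D w)) {w. reduced w}"
    using assms(1) by (simp add: is_aut2_def bij_betw_def)
  ultimately show False
    using assms(2,3) by (auto dest: inj_onD[of _ _ W "[]"])
qed

lemma red_sub2_sub2_lt_ne_Nil:
  assumes "is_aut2 C D" "a \<noteq> b" "reduced W" "W \<noteq> []"
  shows "red (sub2 (sub2 (lt a) (lt b) C) (sub2 (lt a) (lt b) D) W) \<noteq> []"
  using assms red_sub2_ne_Nil_if_aut2 red_sub2_lt_eq_Nil by (metis sub2_sub2)

lemma fst_set_red_sub2_sub2_lt:
  "fst ` set (red (sub2 (sub2 (lt a) (lt b) C) (sub2 (lt a) (lt b) D) W)) \<subseteq> {a, b}"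
  using fst_set_sub2_lt[of a b "sub2 C D W"] set_red_subset by (fastforce simp: sub2_sub2)

lemma subst_assemble:
  "f g = lt g' \<Longrightarrow> subst f (assemble g ws ns) = assemble g' (map (subst f) ws) ns"
proof (induction g ws ns rule: assemble.induct)
  case (4 g w v vs n ns)
  have "subst f (replicate k (g, b)) = replicate k (g', b)" for k b
    by (induction k) (auto simp: subst_def 4(2) lt_def inv_word_def inv_letter_def)
  then have "subst f (xpow g n) = xpow g' n" by (simp add: xpow_def)
  then show ?case using 4 by (simp add: subst_append del: assemble.simps(2,3))
qed (simp_all add: subst_def)

lemma red_assemble_map_red: "red (assemble g (map red ws) ns) = red (assemble g ws ns)"
proof (induction g ws ns rule: assemble.induct)
  case (4 g w v vs n ns)
  let ?X = "xpow g n"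
  have "red (assemble g (w # v # vs) (n # ns)) = red (red w @ red (?X @ red (assemble g (v # vs) ns)))"
    by (simp del: assemble.simps(2,3), metis red_append_red_left red_append_red_right)
  also have "\<dots> = red (assemble g (map red (w # v # vs)) (n # ns))"
    using 4 by (simp del: assemble.simps(2,3), metis red_append_red_left red_append_red_right)
  finally show ?case ..
qed simp_all

lemma reduced_xpow: "reduced (xpow g n)"
proof -
  have "reduced (replicate k (g, b))" for k b
    by (induction k) (auto simp: reduced_Cons inv_letter_def)
  then show ?thesis by (simp add: xpow_def)
qed

lemma assemble_Cons_eq_append: "\<exists>t. assemble g (w # ws) ns = w @ t"
  by (cases ws; cases ns) auto

lemma reduced_assemble:
  assumes "length ws = Suc (length ns)"
    and "\<forall>w\<in>set ws. reduced w \<and> g \<notin> fst ` set w"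
    and "\<forall>i. 0 < i \<and> i < length ns \<longrightarrow> ws ! i \<noteq> []"
    and "\<forall>n\<in>set ns. n \<noteq> 0"
  shows "reduced (assemble g ws ns)"
  using assms
proof (induction ns arbitrary: ws)
  case Nil
  then obtain w where "ws = [w]" by (cases ws) auto
  then show ?case using Nil by simp
next
  case (Cons n ns)
  then obtain w w' ws' where ws: "ws = w # w' # ws'"
    by (cases ws; cases "tl ws") auto
  let ?R = "assemble g (w' # ws') ns"
  have "\<forall>i. 0 < i \<and> i < length ns \<longrightarrow> (w' # ws') ! i \<noteq> []"
    using Cons.prems(3) ws by (metis Suc_mono nth_Cons_Suc zero_less_Suc length_Cons)
  then have R: "reduced ?R"
    using Cons.prems ws by (intro Cons.IH) auto
  have hd_R: "?R = [] \<or> fst (hd ?R) \<noteq> g"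
  proof (cases "w' = []")
    case True
    then have "ns = []" using Cons.prems(3)[rule_format, of 1] ws by auto
    then show ?thesis using True Cons.prems(1) ws by simp
  next
    case False
    obtain t where "?R = w' @ t" using assemble_Cons_eq_append[of g w' ws' ns] by blast
    then show ?thesis using False Cons.prems(2) ws by (cases w') auto
  qed
  have "xpow g n \<noteq> []" "\<forall>l\<in>set (xpow g n). fst l = g"
    using Cons.prems(4) by (auto simp: xpow_def)
  moreover have "reduced w" "g \<notin> fst ` set w" using Cons.prems(2) ws by auto
  ultimately have "reduced (w @ xpow g n @ ?R)"
    using R hd_R reduced_xpow
    by (intro reduced_append_fst_ne) (auto simp: image_iff)
  then show ?case using ws by simp
qed

theorem lemma3p1:
  fixes A B C D :: "gen2 word"
    and Ws :: "gen2 word list" and ns :: "int list"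
  assumes rep: "local_braid_rep A B C D"
    and len: "length Ws = Suc (length ns)"
    and Wred: "\<forall>W\<in>set Ws. reduced W"
    and Wne: "\<forall>i. 0 < i \<and> i < length ns \<longrightarrow> Ws ! i \<noteq> []"
    and nz: "\<forall>n\<in>set ns. n \<noteq> 0"
    and decomp: "red (sub2 (sub2 (lt LX) (lt LC) B) (lt LD) C)
                   = assemble LX (map (sub2 (lt LC) (lt LD)) Ws) ns"
  shows "red (sub2 (sub2 (lt X1) (sub2 (lt X2) (lt X3) C) B) (sub2 (lt X2) (lt X3) D) C)
           = assemble X1 (map (\<lambda>W. red (sub2 (sub2 (lt X2) (lt X3) C) (sub2 (lt X2) (lt X3) D) W)) Ws) ns"
proof -
  let ?V = "sub2 (sub2 (lt X2) (lt X3) C) (sub2 (lt X2) (lt X3) D)"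
  define \<phi> where
    "\<phi> l = (case l of LX \<Rightarrow> lt X1 | LC \<Rightarrow> sub2 (lt X2) (lt X3) C | LD \<Rightarrow> sub2 (lt X2) (lt X3) D)"
    for l
  have "red (sub2 (sub2 (lt X1) (sub2 (lt X2) (lt X3) C) B) (sub2 (lt X2) (lt X3) D) C)
      = red (subst \<phi> (red (sub2 (sub2 (lt LX) (lt LC) B) (lt LD) C)))"
    by (simp add: red_subst_red subst_sub2 \<phi>_def)
  also have "\<dots> = red (assemble X1 (map ?V Ws) ns)"
    by (simp add: decomp subst_assemble subst_sub2 \<phi>_def comp_def)
  also have "\<dots> = red (assemble X1 (map (red \<circ> ?V) Ws) ns)"
    by (simp flip: red_assemble_map_red[of X1 "map ?V Ws"])
  also have "\<dots> = assemble X1 (map (red \<circ> ?V) Ws) ns"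
  proof (intro red_of_reduced reduced_assemble)
    show "\<forall>w\<in>set (map (red \<circ> ?V) Ws). reduced w \<and> X1 \<notin> fst ` set w"
      using fst_set_red_sub2_sub2_lt[of X2 X3 C D] by (fastforce simp: reduced_red)
    have "is_aut2 C D" using rep by (simp add: local_braid_rep_def)
    then show "\<forall>i. 0 < i \<and> i < length ns \<longrightarrow> map (red \<circ> ?V) Ws ! i \<noteq> []"
      using len Wne Wred red_sub2_sub2_lt_ne_Nil[of C D X2 X3] by auto
  qed (use len nz in simp_all)
  finally show ?thesis by (simp add: comp_def)
qed

end
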